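(* Let $\mathfrak p\in\mathcal P$, $\mathfrak P\in\mathfrak p^{\uparrow}$, let $\mathfrak a$ be a left ideal of $A$ and $f:\mathfrak a\to E(U_{\mathfrak P})$ an $A$-homomorphism. If $f\neq0$, then $\operatorname{Ker}f\cap R\subseteq\mathfrak p$.
   Context: Rings are unital. A commutative ring $R$ is pseudo-noetherian if for every $a\in R$ the set of prime ideals minimal among those containing $a$ is finite, and for every such minimal prime $\mathfrak p$ the ring $R_{\mathfrak p}$ is noetherian. Throughout, $R$ is a reduced pseudo-noetherian ring with total ring of fractions $Q$. An $R$-algebra $A$ is pseudo-noetherian if $A_{\mathfrak p}$ is noetherian for every prime $\mathfrak p$ of $R$ of height $\le 1$; a pseudo-noetherian order is a pseudo-noetherian $R$-algebra with no nonzero nilpotent ideals which is torsion free as an $R$-module (so $A\subseteq QA=Q\otimes_RA$). $\mathcal P$ denotes the set of prime ideals of $R$ of height $1$. For a torsion free $R$-module $M$ put $M_{\mathcal P}=\{x\in QM:\ \forall\,\mathfrak p\in\mathcal P\ \exists\, r\in R\setminus\mathfrak p,\ rx\in M\}$; $M$ is divisorial if $M_{\mathcal P}=M$. A pseudo-krullian order is a pseudo-noetherian order that is divisorial as an $R$-module. Throughout, $A$ is a pseudo-krullian order over $R$ such that $A_{\mathfrak p}$ is a finitely generated $R_{\mathfrak p}$-module for every $\mathfrak p\in\mathcal P$. For $\mathfrak p\in\mathcal P$, $\mathfrak p^{\uparrow}$ is the (nonempty, finite) set of prime ideals $\mathfrak P$ of $A$ with $\mathfrak P\cap R=\mathfrak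 p$. For $\mathfrak P\in\mathfrak p^\uparrow$, $U_{\mathfrak P}$ denotes the unique (up to isomorphism) simple $A_{\mathfrak p}$-module with $\operatorname{ann}_AU_{\mathfrak P}=\mathfrak P$. $E(M)$ denotes the injective envelope. *)

theory Defs
  imports Main
begin

section \<open>Commutative ring R (the whole type 'r)\<close>

definition reduced_ring :: "'r::comm_ring_1 itself \<Rightarrow> bool" where
  "reduced_ring _ \<longleftrightarrow> (\<forall>(x::'r) (n::nat). x ^ n = 0 \<longrightarrow> x = 0)"

definition r_ideal :: "'r::comm_ring_1 set \<Rightarrow> bool" where
  "r_ideal I \<longleftrightarrow> 0 \<in> I \<and> (\<forall>x\<in>I. \<forall>y\<in>I. x + y \<in> I) \<and> (\<forall>r. \<forall>x\<in>I. r * x \<in> I)"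

definition r_prime :: "'r::comm_ring_1 set \<Rightarrow> bool" where
  "r_prime p \<longleftrightarrow> r_ideal p \<and> 1 \<notin> p \<and> (\<forall>x y. x * y \<in> p \<longrightarrow> x \<in> p \<or> y \<in> p)"

definition height_le1 :: "'r::comm_ring_1 set \<Rightarrow> bool" where
  "height_le1 p \<longleftrightarrow> r_prime p \<and>
     \<not> (\<exists>q0 q1. r_prime q0 \<and> r_prime q1 \<and> q0 \<subset> q1 \<and> q1 \<subset> p)"

text \<open>height exactly 1; the set \<P> of the paper is the set of such primes.\<close>
definition height1 :: "'r::comm_ring_1 set \<Rightarrow> bool" where
  "height1 p \<longleftrightarrow> height_le1 p \<and> (\<exists>q. r_prime q \<and> q \<subset> p)"

definition min_primes_over :: "'r::comm_ring_1 \<Rightarrow> 'r set set" where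
  "min_primes_over a = {p. r_prime p \<and> a \<in> p \<and>
      (\<forall>q. r_prime q \<and> a \<in> q \<and> q \<subseteq> p \<longrightarrow> q = p)}"

definition regular :: "'r::comm_ring_1 \<Rightarrow> bool" where
  "regular r \<longleftrightarrow> (\<forall>x. r * x = 0 \<longrightarrow> x = 0)"

section \<open>Localization S^{-1}A of an R-algebra A (phi : R \<rightarrow> A) at a multiplicative set S \<subseteq> R\<close>

definition loc_rel :: "('r::comm_ring_1 \<Rightarrow> 'a::ring_1) \<Rightarrow> 'r set \<Rightarrow> (('a \<times> 'r) \<times> ('a \<times> 'r)) set" where
  "loc_rel \<phi> S = {((a, s), (b, t)). s \<in> S \<and> t \<in> S \<and>
       (\<exists>u\<in>S. \<phi> u * (\<phi> t * a - \<phi> s * b) = 0)}"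

definition loc_class :: "('r::comm_ring_1 \<Rightarrow> 'a::ring_1) \<Rightarrow> 'r set \<Rightarrow> 'a \<Rightarrow> 'r \<Rightarrow> ('a \<times> 'r) set" where
  "loc_class \<phi> S a s = loc_rel \<phi> S `` {(a, s)}"

definition loc_carrier :: "('r::comm_ring_1 \<Rightarrow> 'a::ring_1) \<Rightarrow> 'r set \<Rightarrow> ('a \<times> 'r) set set" where
  "loc_carrier \<phi> S = (UNIV \<times> S) // loc_rel \<phi> S"

definition loc_zero :: "('r::comm_ring_1 \<Rightarrow> 'a::ring_1) \<Rightarrow> 'r set \<Rightarrow> ('a \<times> 'r) set" where
  "loc_zero \<phi> S = loc_class \<phi> S 0 1"

definition loc_add :: "('r::comm_ring_1 \<Rightarrow> 'a::ring_1) \<Rightarrow> 'r set \<Rightarrow>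
    ('a \<times> 'r) set \<Rightarrow> ('a \<times> 'r) set \<Rightarrow> ('a \<times> 'r) set" where
  "loc_add \<phi> S X Y = the_elem {loc_class \<phi> S (\<phi> t * a + \<phi> s * b) (s * t) | a s b t.
       (a, s) \<in> X \<and> (b, t) \<in> Y}"

definition loc_mult :: "('r::comm_ring_1 \<Rightarrow> 'a::ring_1) \<Rightarrow> 'r set \<Rightarrow>
    ('a \<times> 'r) set \<Rightarrow> ('a \<times> 'r) set \<Rightarrow> ('a \<times> 'r) set" where
  "loc_mult \<phi> S X Y = the_elem {loc_class \<phi> S (a * b) (s * t) | a s b t.
       (a, s) \<in> X \<and> (b, t) \<in> Y}"

definition loc_smul :: "('r::comm_ring_1 \<Rightarrow> 'a::ring_1) \<Rightarrow> 'r set \<Rightarrow>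
    'r \<Rightarrow> ('a \<times> 'r) set \<Rightarrow> ('a \<times> 'r) set" where
  "loc_smul \<phi> S r X = the_elem {loc_class \<phi> S (\<phi> r * a) s | a s. (a, s) \<in> X}"

text \<open>action of S^{-1}R on S^{-1}A\<close>
definition loc_lsmul :: "('r::comm_ring_1 \<Rightarrow> 'a::ring_1) \<Rightarrow> 'r set \<Rightarrow>
    ('r \<times> 'r) set \<Rightarrow> ('a \<times> 'r) set \<Rightarrow> ('a \<times> 'r) set" where
  "loc_lsmul \<phi> S X Y = the_elem {loc_class \<phi> S (\<phi> r * a) (s * t) | r s a t.
       (r, s) \<in> X \<and> (a, t) \<in> Y}"

definition loc_lideal :: "('r::comm_ring_1 \<Rightarrow> 'a::ring_1) \<Rightarrow> 'r set \<Rightarrow> ('a \<times> 'r) set set \<Rightarrow> bool" where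
  "loc_lideal \<phi> S J \<longleftrightarrow> J \<subseteq> loc_carrier \<phi> S \<and> loc_zero \<phi> S \<in> J \<and>
     (\<forall>X\<in>J. \<forall>Y\<in>J. loc_add \<phi> S X Y \<in> J) \<and>
     (\<forall>Z\<in>loc_carrier \<phi> S. \<forall>X\<in>J. loc_mult \<phi> S Z X \<in> J)"

definition loc_rideal :: "('r::comm_ring_1 \<Rightarrow> 'a::ring_1) \<Rightarrow> 'r set \<Rightarrow> ('a \<times> 'r) set set \<Rightarrow> bool" where
  "loc_rideal \<phi> S J \<longleftrightarrow> J \<subseteq> loc_carrier \<phi> S \<and> loc_zero \<phi> S \<in> J \<and>
     (\<forall>X\<in>J. \<forall>Y\<in>J. loc_add \<phi> S X Y \<in> J) \<and>
     (\<forall>Z\<in>loc_carrier \<phi> S. \<forall>X\<in>J. loc_mult \<phi> S X Z \<in> J)"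

definition loc_noetherian :: "('r::comm_ring_1 \<Rightarrow> 'a::ring_1) \<Rightarrow> 'r set \<Rightarrow> bool" where
  "loc_noetherian \<phi> S \<longleftrightarrow>
     (\<forall>J :: nat \<Rightarrow> ('a \<times> 'r) set set. (\<forall>n. loc_lideal \<phi> S (J n)) \<and> (\<forall>n. J n \<subseteq> J (Suc n))
         \<longrightarrow> (\<exists>n. \<forall>m\<ge>n. J m = J n)) \<and>
     (\<forall>J :: nat \<Rightarrow> ('a \<times> 'r) set set. (\<forall>n. loc_rideal \<phi> S (J n)) \<and> (\<forall>n. J n \<subseteq> J (Suc n))
         \<longrightarrow> (\<exists>n. \<forall>m\<ge>n. J m = J n))"

text \<open>S^{-1}A is a finitely generated S^{-1}R-module.\<close>
definition loc_fg :: "('r::comm_ring_1 \<Rightarrow> 'a::ring_1) \<Rightarrow> 'r set \<Rightarrow> bool" where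
  "loc_fg \<phi> S \<longleftrightarrow> (\<exists>G. finite G \<and> G \<subseteq> loc_carrier \<phi> S \<and>
     (\<forall>N. G \<subseteq> N \<and> N \<subseteq> loc_carrier \<phi> S \<and> loc_zero \<phi> S \<in> N \<and>
          (\<forall>X\<in>N. \<forall>Y\<in>N. loc_add \<phi> S X Y \<in> N) \<and>
          (\<forall>c\<in>loc_carrier (\<lambda>x. x) S. \<forall>X\<in>N. loc_lsmul \<phi> S c X \<in> N)
        \<longrightarrow> N = loc_carrier \<phi> S))"

definition compl_prime :: "'r::comm_ring_1 set \<Rightarrow> 'r set" where
  "compl_prime p = UNIV - p"

definition regulars :: "'r::comm_ring_1 set" where
  "regulars = {r. regular r}"

definition pseudo_noetherian_ring :: "'r::comm_ring_1 itself \<Rightarrow> bool" where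
  "pseudo_noetherian_ring _ \<longleftrightarrow> (\<forall>a::'r. finite (min_primes_over a) \<and>
     (\<forall>p\<in>min_primes_over a. loc_noetherian (\<lambda>x::'r. x) (compl_prime p)))"

section \<open>The R-algebra A (the whole type 'a, structure map phi)\<close>

definition r_algebra :: "('r::comm_ring_1 \<Rightarrow> 'a::ring_1) \<Rightarrow> bool" where
  "r_algebra \<phi> \<longleftrightarrow> \<phi> 1 = 1 \<and> (\<forall>x y. \<phi> (x + y) = \<phi> x + \<phi> y) \<and>
     (\<forall>x y. \<phi> (x * y) = \<phi> x * \<phi> y) \<and> (\<forall>r a. \<phi> r * a = a * \<phi> r)"

definition a_lideal :: "'a::ring_1 set \<Rightarrow> bool" where
  "a_lideal I \<longleftrightarrow> 0 \<in> I \<and> (\<forall>x\<in>I. \<forall>y\<in>I. x + y \<in> I) \<and> (\<forall>b. \<forall>x\<in>I. b * x \<in> I)"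

definition a_ideal :: "'a::ring_1 set \<Rightarrow> bool" where
  "a_ideal I \<longleftrightarrow> a_lideal I \<and> (\<forall>b. \<forall>x\<in>I. x * b \<in> I)"

definition a_prime :: "'a::ring_1 set \<Rightarrow> bool" where
  "a_prime P \<longleftrightarrow> a_ideal P \<and> P \<noteq> UNIV \<and>
     (\<forall>I J. a_ideal I \<and> a_ideal J \<and> (\<forall>x\<in>I. \<forall>y\<in>J. x * y \<in> P) \<longrightarrow> I \<subseteq> P \<or> J \<subseteq> P)"

definition nilpotent_ideal :: "'a::ring_1 set \<Rightarrow> bool" where
  "nilpotent_ideal I \<longleftrightarrow> a_ideal I \<and>
     (\<exists>n. \<forall>xs. length xs = n \<and> set xs \<subseteq> I \<longrightarrow> prod_list xs = 0)"

definition torsion_free :: "('r::comm_ring_1 \<Rightarrow> 'a::ring_1) \<Rightarrow> bool" where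
  "torsion_free \<phi> \<longleftrightarrow> (\<forall>r a. regular r \<and> \<phi> r * a = 0 \<longrightarrow> a = 0)"

definition pseudo_noetherian_algebra :: "('r::comm_ring_1 \<Rightarrow> 'a::ring_1) \<Rightarrow> bool" where
  "pseudo_noetherian_algebra \<phi> \<longleftrightarrow> r_algebra \<phi> \<and>
     (\<forall>p. height_le1 p \<longrightarrow> loc_noetherian \<phi> (compl_prime p))"

definition pseudo_noetherian_order :: "('r::comm_ring_1 \<Rightarrow> 'a::ring_1) \<Rightarrow> bool" where
  "pseudo_noetherian_order \<phi> \<longleftrightarrow> pseudo_noetherian_algebra \<phi> \<and>
     (\<forall>I::'a set. nilpotent_ideal I \<longrightarrow> I = {0}) \<and> torsion_free \<phi>"

text \<open>A is divisorial: A_P = A inside QA = (regulars)^{-1} A, A embedded via a \<mapsto> a/1.\<close>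
definition divisorial :: "('r::comm_ring_1 \<Rightarrow> 'a::ring_1) \<Rightarrow> bool" where
  "divisorial \<phi> \<longleftrightarrow> (\<forall>X\<in>loc_carrier \<phi> regulars.
     (\<forall>p. height1 p \<longrightarrow> (\<exists>r. r \<notin> p \<and> loc_smul \<phi> regulars r X \<in> range (\<lambda>a. loc_class \<phi> regulars a 1)))
       \<longrightarrow> X \<in> range (\<lambda>a. loc_class \<phi> regulars a 1))"

definition pseudo_krullian_order :: "('r::comm_ring_1 \<Rightarrow> 'a::ring_1) \<Rightarrow> bool" where
  "pseudo_krullian_order \<phi> \<longleftrightarrow> pseudo_noetherian_order \<phi> \<and> divisorial \<phi>"

text \<open>primes of A lying over p: P \<inter> R = p, i.e. phi^{-1}(P) = p\<close>
definition lying_over :: "('r::comm_ring_1 \<Rightarrow> 'a::ring_1) \<Rightarrow> 'r set \<Rightarrow> 'a set set" where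
  "lying_over \<phi> p = {P. a_prime P \<and> \<phi> -` P = p}"

section \<open>Left A-modules: the whole type 'm with action act\<close>

definition a_module :: "('a::ring_1 \<Rightarrow> 'm::ab_group_add \<Rightarrow> 'm) \<Rightarrow> bool" where
  "a_module act \<longleftrightarrow> (\<forall>a m n. act a (m + n) = act a m + act a n) \<and>
     (\<forall>a b m. act (a + b) m = act a m + act b m) \<and>
     (\<forall>a b m. act (a * b) m = act a (act b m)) \<and> (\<forall>m. act 1 m = m)"

definition submodule :: "('a::ring_1 \<Rightarrow> 'm::ab_group_add \<Rightarrow> 'm) \<Rightarrow> 'm set \<Rightarrow> bool" where
  "submodule act N \<longleftrightarrow> 0 \<in> N \<and> (\<forall>x\<in>N. \<forall>y\<in>N. x + y \<in> N) \<and> (\<forall>a. \<forall>x\<in>N. act a x \<in> N)"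

definition a_hom_on :: "('a::ring_1 \<Rightarrow> 'm::ab_group_add \<Rightarrow> 'm) \<Rightarrow> 'a set \<Rightarrow> ('a \<Rightarrow> 'm) \<Rightarrow> bool" where
  "a_hom_on act I g \<longleftrightarrow> (\<forall>x\<in>I. \<forall>y\<in>I. g (x + y) = g x + g y) \<and>
     (\<forall>b. \<forall>x\<in>I. g (b * x) = act b (g x))"

text \<open>injectivity of the module (whole type 'm), via Baer's criterion\<close>
definition injective_module :: "('a::ring_1 \<Rightarrow> 'm::ab_group_add \<Rightarrow> 'm) \<Rightarrow> bool" where
  "injective_module act \<longleftrightarrow> a_module act \<and>
     (\<forall>I g. a_lideal I \<and> a_hom_on act I g \<longrightarrow> (\<exists>m. \<forall>x\<in>I. g x = act x m))"

definition essential_sub :: "('a::ring_1 \<Rightarrow> 'm::ab_group_add \<Rightarrow> 'm) \<Rightarrow> 'm set \<Rightarrow> bool" where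
  "essential_sub act U \<longleftrightarrow> submodule act U \<and>
     (\<forall>N. submodule act N \<and> N \<noteq> {0} \<longrightarrow> N \<inter> U \<noteq> {0})"

text \<open>The whole type 'm (with act) is an injective envelope of its submodule U.\<close>
definition injective_envelope_of :: "('a::ring_1 \<Rightarrow> 'm::ab_group_add \<Rightarrow> 'm) \<Rightarrow> 'm set \<Rightarrow> bool" where
  "injective_envelope_of act U \<longleftrightarrow> injective_module act \<and> essential_sub act U"

text \<open>U (a submodule of an A-module) is the simple A_p-module U_P with ann_A U = P:
  elements of R\<setminus>p act bijectively on U (so U is an A_p-module), U is nonzero and
  has no A_p-submodules besides 0 and U, and its annihilator in A is P.\<close>
definition is_U :: "('r::comm_ring_1 \<Rightarrow> 'a::ring_1) \<Rightarrow> ('a \<Rightarrow> 'm::ab_group_add \<Rightarrow> 'm) \<Rightarrow>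
    'r set \<Rightarrow> 'a set \<Rightarrow> 'm set \<Rightarrow> bool" where
  "is_U \<phi> act p P U \<longleftrightarrow> submodule act U \<and> U \<noteq> {0} \<and>
     (\<forall>s. s \<notin> p \<longrightarrow> bij_betw (act (\<phi> s)) U U) \<and>
     (\<forall>N. submodule act N \<and> N \<subseteq> U \<and>
          (\<forall>s. s \<notin> p \<longrightarrow> (\<forall>u\<in>U. act (\<phi> s) u \<in> N \<longrightarrow> u \<in> N))
        \<longrightarrow> N = {0} \<or> N = U) \<and>
     {a. \<forall>u\<in>U. act a u = 0} = P"

end

theory Submission
  imports Defs
begin

text \<open>The image of \<open>f\<close> is a nonzero submodule of the essential extension \<open>E(U\<^sub>\<frakP>)\<close> of
  \<open>U\<^sub>\<frakP>\<close>, so it contains some \<open>f x \<noteq> 0\<close> in \<open>U\<^sub>\<frakP>\<close>. For \<open>r \<in> Ker f \<inter> R\<close>, centrality of \<open>r\<close>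
  gives \<open>r f(x) = f(r x) = f(x r) = x f(r) = 0\<close>; since elements of \<open>R \<setminus> \<frakp>\<close> act
  injectively on the \<open>A\<^sub>\<frakp>\<close>-module \<open>U\<^sub>\<frakP>\<close>, \<open>r\<close> must lie in \<open>\<frakp>\<close>.\<close>

lemma a_module_act_zero_right:
  assumes "a_module act"
  shows "act a 0 = 0"
proof -
  have "act a (0 + 0) = act a 0 + act a 0"
    using assms unfolding a_module_def by blast
  then show ?thesis by simp
qed

lemma a_module_act_zero_left:
  assumes "a_module act"
  shows "act 0 m = 0"
proof -
  have "act (0 + 0) m = act 0 m + act 0 m"
    using assms unfolding a_module_def by blast
  then show ?thesis by simp
qed

lemma a_hom_on_zero:
  assumes "a_module act" and "a_lideal I" and "a_hom_on act I g"
  shows "g 0 = 0"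
proof -
  have "0 \<in> I" using assms(2) unfolding a_lideal_def by blast
  then have "g (0 * 0) = act 0 (g 0)"
    using assms(3) unfolding a_hom_on_def by blast
  then show ?thesis using a_module_act_zero_left[OF assms(1)] by simp
qed

lemma submodule_image_a_hom_on:
  assumes "a_module act" and "a_lideal I" and "a_hom_on act I g"
  shows "submodule act (g ` I)"
proof -
  have I: "0 \<in> I" "\<forall>x\<in>I. \<forall>y\<in>I. x + y \<in> I" "\<forall>b. \<forall>x\<in>I. b * x \<in> I"
    using assms(2) unfolding a_lideal_def by auto
  have g: "\<forall>x\<in>I. \<forall>y\<in>I. g (x + y) = g x + g y" "\<forall>b. \<forall>x\<in>I. g (b * x) = act b (g x)"
    using assms(3) unfolding a_hom_on_def by auto
  have "g 0 = 0" by (rule a_hom_on_zero[OF assms])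
  then have "0 \<in> g ` I" using I(1) by (metis image_eqI)
  moreover have "g x + g y \<in> g ` I" if "x \<in> I" "y \<in> I" for x y
    using that I(2) g(1) by (metis image_eqI)
  moreover have "act b (g x) \<in> g ` I" if "x \<in> I" for b x
    using that I(3) g(2) by (metis image_eqI)
  ultimately show ?thesis unfolding submodule_def by blast
qed

lemma essential_sub_meets_image:
  assumes "a_module act" and "essential_sub act U"
    and "a_lideal I" and "a_hom_on act I g" and "\<exists>x\<in>I. g x \<noteq> 0"
  obtains x where "x \<in> I" "g x \<in> U" "g x \<noteq> 0"
proof -
  have "g ` I \<noteq> {0}" using assms(5) by blast
  then have "g ` I \<inter> U \<noteq> {0}"
    using assms(2) submodule_image_a_hom_on[OF assms(1,3,4)]
    unfolding essential_sub_def by blast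
  moreover have "0 \<in> g ` I \<inter> U"
    using assms(2) submodule_image_a_hom_on[OF assms(1,3,4)]
    unfolding essential_sub_def submodule_def by blast
  ultimately show ?thesis using that by blast
qed

lemma a_hom_on_central_kernel_annihilates:
  assumes "a_module act" and "a_hom_on act I g"
    and central: "\<forall>a. c * a = a * c" and "c \<in> I" "g c = 0" "x \<in> I"
  shows "act c (g x) = 0"
proof -
  have "act c (g x) = g (c * x)"
    using assms(2,6) unfolding a_hom_on_def by simp
  also have "\<dots> = g (x * c)" using central by simp
  also have "\<dots> = act x (g c)"
    using assms(2,4) unfolding a_hom_on_def by simp
  also have "\<dots> = 0" using assms(5) a_module_act_zero_right[OF assms(1)] by simp
  finally show ?thesis .
qed

lemma is_U_act_eq_zero_imp:
  assumes "a_module act" and "is_U \<phi> act p P U"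
    and "s \<notin> p" "u \<in> U" "act (\<phi> s) u = 0"
  shows "u = 0"
proof -
  have "inj_on (act (\<phi> s)) U"
    using assms(2,3) unfolding is_U_def bij_betw_def by blast
  moreover have "0 \<in> U" using assms(2) unfolding is_U_def submodule_def by blast
  ultimately show ?thesis
    using assms(4,5) a_module_act_zero_right[OF assms(1)] by (metis inj_onD)
qed

lemma pseudo_krullian_order_r_algebra:
  "pseudo_krullian_order \<phi> \<Longrightarrow> r_algebra \<phi>"
  unfolding pseudo_krullian_order_def pseudo_noetherian_order_def
    pseudo_noetherian_algebra_def by blast

theorem lemma2p2:
  fixes \<phi> :: "'r::comm_ring_1 \<Rightarrow> 'a::ring_1"
    and act :: "'a \<Rightarrow> 'm::ab_group_add \<Rightarrow> 'm"
    and p :: "'r set" and P :: "'a set" and U :: "'m set"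
    and \<aa> :: "'a set" and f :: "'a \<Rightarrow> 'm"
  assumes R_reduced: "reduced_ring TYPE('r)"
    and R_pn: "pseudo_noetherian_ring TYPE('r)"
    and A_pk: "pseudo_krullian_order \<phi>"
    and A_fg: "\<forall>q. height1 q \<longrightarrow> loc_fg \<phi> (compl_prime q)"
    and p_in: "height1 p"
    and P_in: "P \<in> lying_over \<phi> p"
    and mod: "a_module act"
    and U: "is_U \<phi> act p P U"
    and E: "injective_envelope_of act U"
    and a_ideal: "a_lideal \<aa>"
    and f_hom: "a_hom_on act \<aa> f"
    and f_nz: "\<exists>x\<in>\<aa>. f x \<noteq> 0"
  shows "{r. \<phi> r \<in> \<aa> \<and> f (\<phi> r) = 0} \<subseteq> p"
proof
  fix r assume r: "r \<in> {r. \<phi> r \<in> \<aa> \<and> f (\<phi> r) = 0}"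
  have "essential_sub act U" using E unfolding injective_envelope_of_def by blast
  then obtain x where x: "x \<in> \<aa>" "f x \<in> U" "f x \<noteq> 0"
    using essential_sub_meets_image mod a_ideal f_hom f_nz by metis
  have "\<forall>a. \<phi> r * a = a * \<phi> r"
    using pseudo_krullian_order_r_algebra[OF A_pk] unfolding r_algebra_def by blast
  then have "act (\<phi> r) (f x) = 0"
    using a_hom_on_central_kernel_annihilates[OF mod f_hom] r x(1) by blast
  then show "r \<in> p" using is_U_act_eq_zero_imp[OF mod U _ x(2)] x(3) by blast
qed

end
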